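(* Suppose $1/n\ll\varepsilon_3\ll\varepsilon_4\ll\eta_2\ll1$. Let $G$ be a digraph on $n$ vertices with $\delta^0(G)\geq n/2$ and let $A,B,S,T$ be a partition of $V(G)$ satisfying the $ST$-conditions, with sizes $a,b,s,t$. Then: (i) if $a=b\in\{0,1\}$, then for any choice of $(X_1,Y_1),(X_2,Y_2)\in\{(S,T),(T,S)\}$ there are two vertex-disjoint edges $e_1\in E(X_1,Y_1)$ and $e_2\in E(X_2,Y_2)$; (ii) if $A=\emptyset$, then there are two vertex-disjoint edges in $E(T,S)$; (iii) if $a=1$ and $b\geq 2$, then there are two vertex-disjoint edges in $E(T,S)$; (iv) there are two vertex-disjoint edges in $E(S,T\cup A)\cup E(T,S\cup B)$.
   Context: Digraphs have no loops and at most one edge in each direction between two vertices; $\delta^0$ is the minimum semidegree; $E(X,Y)$ is the set of edges $xy$ with $x\in X$, $y\in Y$; $d^+_X(x)=|N^+(x)\cap X|$, $d^-_X(x)=|N^-(x)\cap X|$, and $d^\pm_X(x)\geq c$ means both are $\geq c$; $G[X]$ is the induced subdigraph. The $ST$-conditions on a partition $A,B,S,T$ of sizes $a,b,s,t$: $a\leq b$, $s\leq t$; $\lfloor n/2\rfloor-\varepsilon_3n\leq s,t\leq\lceil n/2\rceil+\varepsilon_3 n$; $\delta^0(G[S]),\delta^0(G[T])\geq\eta_2 n$; $d^\pm_S(x)\geq n/2-\varepsilon_3n$ for all but at most $\varepsilon_3 n$ vertices $x\in S$; $d^\pm_T(x)\geq n/2-\varepsilon_3n$ for all but at most $\varepsilon_3n$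 vertices $x\in T$; $a+b\leq\varepsilon_3 n$; for all $x\in A$: $d^-_T(x),d^+_S(x)>n/2-3\eta_2n$ and $d^-_S(x),d^+_T(x)\leq 3\eta_2 n$; for all $x\in B$: $d^-_S(x),d^+_T(x)>n/2-3\eta_2 n$ and $d^-_T(x),d^+_S(x)\leq 3\eta_2 n$. The hierarchy $\alpha\ll\beta$ means $\alpha$ is sufficiently small as a function of $\beta$. *)

theory Defs
  imports Complex_Main
begin

text \<open>A digraph is a finite vertex set V with an edge set E \<subseteq> V \<times> V without loops.
  (Using a set of ordered pairs gives at most one edge in each direction.)\<close>

definition digraph :: "'a set \<Rightarrow> ('a \<times> 'a) set \<Rightarrow> bool" where
  "digraph V E \<longleftrightarrow> finite V \<and> E \<subseteq> V \<times> V \<and> (\<forall>x. (x, x) \<notin> E)"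

definition dout :: "('a \<times> 'a) set \<Rightarrow> 'a set \<Rightarrow> 'a \<Rightarrow> nat" where
  "dout E X x = card {y \<in> X. (x, y) \<in> E}"

definition din :: "('a \<times> 'a) set \<Rightarrow> 'a set \<Rightarrow> 'a \<Rightarrow> nat" where
  "din E X x = card {y \<in> X. (y, x) \<in> E}"

definition min_semideg :: "('a \<times> 'a) set \<Rightarrow> 'a set \<Rightarrow> nat" where
  "min_semideg E X = Min ((\<lambda>x. dout E X x) ` X \<union> (\<lambda>x. din E X x) ` X)"

definition edges_between :: "('a \<times> 'a) set \<Rightarrow> 'a set \<Rightarrow> 'a set \<Rightarrow> ('a \<times> 'a) set" where
  "edges_between E X Y = {e \<in> E. fst e \<in> X \<and> snd e \<in> Y}"

definition vdisjoint :: "('a \<times> 'a) \<Rightarrow> ('a \<times> 'a) \<Rightarrow> bool" where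
  "vdisjoint e1 e2 \<longleftrightarrow> {fst e1, snd e1} \<inter> {fst e2, snd e2} = {}"

definition ST_conditions ::
  "real \<Rightarrow> real \<Rightarrow> 'a set \<Rightarrow> ('a \<times> 'a) set \<Rightarrow> 'a set \<Rightarrow> 'a set \<Rightarrow> 'a set \<Rightarrow> 'a set \<Rightarrow> bool" where
  "ST_conditions eps3 eta2 V E A B S T \<longleftrightarrow>
    (let n = real (card V) in
     A \<union> B \<union> S \<union> T = V \<and>
     A \<inter> B = {} \<and> A \<inter> S = {} \<and> A \<inter> T = {} \<and> B \<inter> S = {} \<and> B \<inter> T = {} \<and> S \<inter> T = {} \<and>
     card A \<le> card B \<and> card S \<le> card T \<and>
     real_of_int \<lfloor>n / 2\<rfloor> - eps3 * n \<le> card S \<and> real (card S) \<le> real_of_int \<lceil>n / 2\<rceil> + eps3 * n \<and>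
     real_of_int \<lfloor>n / 2\<rfloor> - eps3 * n \<le> card T \<and> real (card T) \<le> real_of_int \<lceil>n / 2\<rceil> + eps3 * n \<and>
     real (min_semideg E S) \<ge> eta2 * n \<and> real (min_semideg E T) \<ge> eta2 * n \<and>
     real (card {x \<in> S. \<not> (real (dout E S x) \<ge> n/2 - eps3 * n \<and> real (din E S x) \<ge> n/2 - eps3 * n)}) \<le> eps3 * n \<and>
     real (card {x \<in> T. \<not> (real (dout E T x) \<ge> n/2 - eps3 * n \<and> real (din E T x) \<ge> n/2 - eps3 * n)}) \<le> eps3 * n \<and>
     real (card A + card B) \<le> eps3 * n \<and>
     (\<forall>x \<in> A. real (din E T x) > n/2 - 3 * eta2 * n \<and> real (dout E S x) > n/2 - 3 * eta2 * n \<and>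
               real (din E S x) \<le> 3 * eta2 * n \<and> real (dout E T x) \<le> 3 * eta2 * n) \<and>
     (\<forall>x \<in> B. real (din E S x) > n/2 - 3 * eta2 * n \<and> real (dout E T x) > n/2 - 3 * eta2 * n \<and>
               real (din E T x) \<le> 3 * eta2 * n \<and> real (dout E S x) \<le> 3 * eta2 * n))"

end

theory Submission
  imports Defs
begin

text \<open>
  The argument is elementary counting.  A vertex of S has semidegree at least n/2 in G but at
  most |S| - 1 neighbours inside S, so it has at least n/2 + 1 - |S| neighbours in T, A and B
  (lemma S_degrees; symmetrically for T).  Since n = |A| + |B| + |S| + |T| and |A|, |B| are tiny,
  after discarding the few vertices with many neighbours in A or B the remaining vertices of S
  (or of T) have degree at least 1 or 2 towards the other side.  Purely combinatorial lemmas then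
  turn such degree conditions into two vertex-disjoint edges.

  The proposition follows by instantiating
  eta0 = eps4_0 = eps3_0 = 1/100 and N = 1000.
\<close>

definition disjoint_edges :: "('a \<times> 'a) set \<Rightarrow> ('a \<times> 'a) set \<Rightarrow> bool" where
  "disjoint_edges F G \<longleftrightarrow> (\<exists>e1\<in>F. \<exists>e2\<in>G. vdisjoint e1 e2)"

lemma edges_between_iff [simp]:
  "(x, y) \<in> edges_between E X Y \<longleftrightarrow> (x, y) \<in> E \<and> x \<in> X \<and> y \<in> Y"
  by (simp add: edges_between_def)

lemma disjoint_edgesI:
  assumes "(x1, y1) \<in> F" "(x2, y2) \<in> G"
    and "x1 \<noteq> x2" "x1 \<noteq> y2" "y1 \<noteq> x2" "y1 \<noteq> y2"
  shows "disjoint_edges F G"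
  unfolding disjoint_edges_def
proof (intro bexI)
  show "vdisjoint (x1, y1) (x2, y2)" using assms(3-) by (auto simp: vdisjoint_def)
qed (use assms in auto)

lemma disjoint_edges_sym: "disjoint_edges F G \<Longrightarrow> disjoint_edges G F"
  unfolding disjoint_edges_def vdisjoint_def by blast

lemma disjoint_edges_mono:
  "disjoint_edges F G \<Longrightarrow> F \<subseteq> F' \<Longrightarrow> G \<subseteq> G' \<Longrightarrow> disjoint_edges F' G'"
  unfolding disjoint_edges_def by blast

lemma ex_outside:
  assumes "finite W" "card W < card X"
  shows "\<exists>x\<in>X. x \<notin> W"
proof (rule ccontr)
  assume "\<not> ?thesis"
  then have "X \<subseteq> W" by blast
  then show False using assms card_mono[of W X] by simp
qed

lemma ex_other:
  assumes "2 \<le> card X" shows "\<exists>x\<in>X. x \<noteq> w"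
  using ex_outside[of "{w}" X] assms by auto

lemma ex_other2:
  assumes "3 \<le> card X" shows "\<exists>x\<in>X. x \<noteq> w1 \<and> x \<noteq> w2"
  using ex_outside[of "{w1, w2}" X] assms card_insert_le_m1[of 2 "{w2}" w1] by auto

lemma ex_member: "0 < card X \<Longrightarrow> \<exists>x. x \<in> X"
  by (metis card.empty ex_in_conv less_irrefl)

lemma dout_pos_imp_neighbour: "0 < dout E Y x \<Longrightarrow> \<exists>y\<in>Y. (x, y) \<in> E"
  unfolding dout_def by (metis (no_types, lifting) card.empty empty_Collect_eq less_irrefl)

lemma din_pos_imp_neighbour: "0 < din E Y x \<Longrightarrow> \<exists>y\<in>Y. (y, x) \<in> E"
  unfolding din_def by (metis (no_types, lifting) card.empty empty_Collect_eq less_irrefl)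

text \<open>Fix an edge u1w1 from U; if no edge avoids both u1 and w1, then another vertex u2 of U sends its
  edge to w1 and another vertex v of W receives its edge from u1, giving u2w1 and u1v.\<close>
lemma disjoint_edges_of_covers:
  assumes XY: "X \<inter> Y = {}" and UX: "U \<subseteq> X" and WY: "W \<subseteq> Y"
    and U2: "2 \<le> card U" and W2: "2 \<le> card W"
    and out: "\<forall>u\<in>U. \<exists>y\<in>Y. (u, y) \<in> E" and inn: "\<forall>w\<in>W. \<exists>x\<in>X. (x, w) \<in> E"
  shows "disjoint_edges (edges_between E X Y) (edges_between E X Y)"
proof -
  obtain u1 where u1: "u1 \<in> U" using ex_member[of U] U2 by auto
  then obtain w1 where w1: "w1 \<in> Y" "(u1, w1) \<in> E" using out by blast
  show ?thesis
  proof (cases "\<exists>x\<in>X. \<exists>y\<in>Y. (x, y) \<in> E \<and> x \<noteq> u1 \<and> y \<noteq> w1")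
    case True
    then obtain x y where "x \<in> X" "y \<in> Y" "(x, y) \<in> E" "x \<noteq> u1" "y \<noteq> w1" by blast
    then show ?thesis using u1 w1 UX XY by (intro disjoint_edgesI[of u1 w1 _ x y]) auto
  next
    case False
    obtain u2 where u2: "u2 \<in> U" "u2 \<noteq> u1" using ex_other[OF U2] by blast
    then obtain w2 where w2: "w2 \<in> Y" "(u2, w2) \<in> E" using out by blast
    have "w2 = w1" using False u2 w2 UX by blast
    obtain v where v: "v \<in> W" "v \<noteq> w1" using ex_other[OF W2] by blast
    then obtain x where x: "x \<in> X" "(x, v) \<in> E" using inn by blast
    have "x = u1" using False x v WY by blast
    then show ?thesis using u1 u2 w2 v x \<open>w2 = w1\<close> UX WY XY
      by (intro disjoint_edgesI[of u2 w1 _ u1 v]) auto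
  qed
qed

lemma disjoint_edges_of_out_degrees:
  assumes XY: "X \<inter> Y = {}" and UX: "U \<subseteq> X" and U2: "2 \<le> card U"
    and deg: "\<forall>u\<in>U. 2 \<le> dout E Y u"
  shows "disjoint_edges (edges_between E X Y) (edges_between E X Y)"
proof -
  obtain u0 where u0: "u0 \<in> U" using ex_member[of U] U2 by auto
  let ?W = "{y \<in> Y. (u0, y) \<in> E}"
  have "2 \<le> card ?W" using deg u0 by (simp add: dout_def)
  moreover have "\<forall>u\<in>U. \<exists>y\<in>Y. (u, y) \<in> E"
    using deg by (intro ballI dout_pos_imp_neighbour) (auto dest!: bspec)
  ultimately show ?thesis using u0 UX by (intro disjoint_edges_of_covers[OF XY UX _ U2]) auto
qed

lemma disjoint_edges_of_in_degrees:
  assumes XY: "X \<inter> Y = {}" and WY: "W \<subseteq> Y" and W2: "2 \<le> card W"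
    and deg: "\<forall>w\<in>W. 2 \<le> din E X w"
  shows "disjoint_edges (edges_between E X Y) (edges_between E X Y)"
proof -
  obtain w0 where w0: "w0 \<in> W" using ex_member[of W] W2 by auto
  let ?U = "{x \<in> X. (x, w0) \<in> E}"
  have "2 \<le> card ?U" using deg w0 by (simp add: din_def)
  moreover have "\<forall>w\<in>W. \<exists>x\<in>X. (x, w) \<in> E"
    using deg by (intro ballI din_pos_imp_neighbour) (auto dest!: bspec)
  ultimately show ?thesis using w0 WY by (intro disjoint_edges_of_covers[OF XY _ WY _ W2]) auto
qed

lemma mixed_edges_of_degrees:
  assumes XY: "X \<inter> Y = {}" and UX: "U \<subseteq> X" and U2: "2 \<le> card U"
    and out: "\<forall>u\<in>U. 0 < dout E Y u" and inn: "\<forall>u\<in>U. 2 \<le> din E Y u"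
  shows "disjoint_edges (edges_between E X Y) (edges_between E Y X)"
proof -
  obtain x1 where x1: "x1 \<in> U" using ex_member[of U] U2 by auto
  then obtain y1 where y1: "y1 \<in> Y" "(x1, y1) \<in> E" using out dout_pos_imp_neighbour by meson
  obtain x2 where x2: "x2 \<in> U" "x2 \<noteq> x1" using ex_other[OF U2] by blast
  have "2 \<le> card {y \<in> Y. (y, x2) \<in> E}" using inn x2(1) by (simp add: din_def)
  then obtain y2 where y2: "y2 \<in> {y \<in> Y. (y, x2) \<in> E}" "y2 \<noteq> y1"
    using ex_other by meson
  show ?thesis using x1 y1 x2 y2 UX XY by (intro disjoint_edgesI[of x1 y1 _ y2 x2]) auto
qed

text \<open>Disjoint edges in opposite directions: two vertices of X with out-neighbours in Y and three
  vertices of Y with out-neighbours in X (three are needed: a directed 4-cycle has no such pair).\<close>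
lemma mixed_edges_of_covers:
  assumes XY: "X \<inter> Y = {}" and UX: "U \<subseteq> X" and WY: "W \<subseteq> Y"
    and U2: "2 \<le> card U" and W3: "3 \<le> card W"
    and out: "\<forall>u\<in>U. \<exists>y\<in>Y. (u, y) \<in> E" and ret: "\<forall>w\<in>W. \<exists>x\<in>X. (w, x) \<in> E"
  shows "disjoint_edges (edges_between E X Y) (edges_between E Y X)"
proof -
  obtain x1 where x1: "x1 \<in> U" using ex_member[of U] U2 by auto
  then obtain y1 where y1: "y1 \<in> Y" "(x1, y1) \<in> E" using out by blast
  obtain x2 where x2: "x2 \<in> U" "x2 \<noteq> x1" using ex_other[OF U2] by blast
  then obtain y2 where y2: "y2 \<in> Y" "(x2, y2) \<in> E" using out by blast
  obtain w where w: "w \<in> W" "w \<noteq> y1" "w \<noteq> y2" using ex_other2[OF W3] by blast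
  then obtain x where x: "x \<in> X" "(w, x) \<in> E" using ret by blast
  show ?thesis
  proof (cases "x = x1")
    case False
    then show ?thesis using x1 y1 w x UX WY XY by (intro disjoint_edgesI[of x1 y1 _ w x]) auto
  next
    case True
    then show ?thesis using x1 x2 y2 w x UX WY XY by (intro disjoint_edgesI[of x2 y2 _ w x1]) auto
  qed
qed

text \<open>If S and T lie on opposite sides of P, Q and every vertex of S (resp. T) has an out-neighbour
  in P (resp. Q), then E(S,P) \<union> E(T,Q) contains two disjoint edges; this is part (iv) when both
  degree bounds are only 1.\<close>
lemma disjoint_edges_of_crossing_covers:
  assumes SQ: "S \<subseteq> Q" and TP: "T \<subseteq> P" and PQ: "P \<inter> Q = {}"
    and S2: "2 \<le> card S" and T2: "2 \<le> card T"
    and outS: "\<forall>x\<in>S. \<exists>y\<in>P. (x, y) \<in> E" and outT: "\<forall>y\<in>T. \<exists>z\<in>Q. (y, z) \<in> E"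
  shows "disjoint_edges (edges_between E S P \<union> edges_between E T Q)
                        (edges_between E S P \<union> edges_between E T Q)"
proof -
  obtain x1 where x1: "x1 \<in> S" using ex_member[of S] S2 by auto
  then obtain y1 where y1: "y1 \<in> P" "(x1, y1) \<in> E" using outS by blast
  obtain y where y: "y \<in> T" "y \<noteq> y1" using ex_other[OF T2] by blast
  then obtain z where z: "z \<in> Q" "(y, z) \<in> E" using outT by blast
  show ?thesis
  proof (cases "z = x1")
    case False
    then show ?thesis using x1 y1 y z SQ TP PQ by (intro disjoint_edgesI[of x1 y1 _ y z]) auto
  next
    case True
    obtain x2 where x2: "x2 \<in> S" "x2 \<noteq> x1" using ex_other[OF S2] by blast
    then obtain y2 where y2: "y2 \<in> P" "(x2, y2) \<in> E" using outS by blast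
    show ?thesis
    proof (cases "y2 = y1")
      case False
      then show ?thesis using x1 y1 x2 y2 SQ PQ by (intro disjoint_edgesI[of x1 y1 _ x2 y2]) auto
    next
      case True
      then show ?thesis using \<open>z = x1\<close> x1 y1 x2 y2 y z SQ TP PQ
        by (intro disjoint_edgesI[of x2 y1 _ y x1]) auto
    qed
  qed
qed

lemma dout_Un_le: "dout E (X \<union> Y) x \<le> dout E X x + dout E Y x"
proof -
  have split: "{y \<in> X \<union> Y. (x, y) \<in> E} = {y \<in> X. (x, y) \<in> E} \<union> {y \<in> Y. (x, y) \<in> E}" by auto
  show ?thesis unfolding dout_def split by (rule card_Un_le)
qed

lemma din_Un_le: "din E (X \<union> Y) x \<le> din E X x + din E Y x"
proof -
  have split: "{y \<in> X \<union> Y. (y, x) \<in> E} = {y \<in> X. (y, x) \<in> E} \<union> {y \<in> Y. (y, x) \<in> E}" by auto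
  show ?thesis unfolding din_def split by (rule card_Un_le)
qed

lemma dout_le_card: "finite X \<Longrightarrow> dout E X x \<le> card X"
  unfolding dout_def by (rule card_mono) auto

lemma din_le_card: "finite X \<Longrightarrow> din E X x \<le> card X"
  unfolding din_def by (rule card_mono) auto

lemma dout_lt_card: "finite X \<Longrightarrow> x \<in> X \<Longrightarrow> (x, x) \<notin> E \<Longrightarrow> dout E X x < card X"
  unfolding dout_def by (rule psubset_card_mono) auto

lemma din_lt_card: "finite X \<Longrightarrow> x \<in> X \<Longrightarrow> (x, x) \<notin> E \<Longrightarrow> din E X x < card X"
  unfolding din_def by (rule psubset_card_mono) auto

lemma min_semideg_le:
  assumes "finite X" "x \<in> X"
  shows "min_semideg E X \<le> dout E X x" "min_semideg E X \<le> din E X x"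
  using assms unfolding min_semideg_def by (auto intro: Min_le)

lemma card_out_neighbours_le:
  assumes "finite Y"
  shows "card {x \<in> X. \<exists>y\<in>Y. (x, y) \<in> E} \<le> (\<Sum>y\<in>Y. din E X y)"
proof -
  have "{x \<in> X. \<exists>y\<in>Y. (x, y) \<in> E} = (\<Union>y\<in>Y. {x \<in> X. (x, y) \<in> E})" by auto
  then show ?thesis unfolding din_def using card_UN_le[OF assms] by simp
qed

lemma card_in_neighbours_le:
  assumes "finite Y"
  shows "card {x \<in> X. \<exists>y\<in>Y. (y, x) \<in> E} \<le> (\<Sum>y\<in>Y. dout E X y)"
proof -
  have "{x \<in> X. \<exists>y\<in>Y. (y, x) \<in> E} = (\<Union>y\<in>Y. {x \<in> X. (y, x) \<in> E})" by auto
  then show ?thesis unfolding dout_def using card_UN_le[OF assms] by simp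
qed

lemma sum_din_eq_sum_dout:
  assumes "finite X" "finite Y"
  shows "(\<Sum>x\<in>X. din E Y x) = (\<Sum>y\<in>Y. dout E X y)"
proof -
  have card_as_sum: "card {z \<in> Z. P z} = (\<Sum>z\<in>Z. if P z then 1 else 0)" if "finite Z" for Z P
    using that by (simp add: sum.If_cases Int_def)
  show ?thesis
    unfolding din_def dout_def using assms by (simp add: card_as_sum sum.swap[of _ X Y])
qed

lemma markov_card:
  fixes f :: "'a \<Rightarrow> real"
  assumes "finite X" "\<forall>x\<in>X. 0 \<le> f x"
  shows "real (card {x \<in> X. c \<le> f x}) * c \<le> (\<Sum>x\<in>X. f x)"
proof -
  have "real (card {x \<in> X. c \<le> f x}) * c = (\<Sum>x\<in>{x \<in> X. c \<le> f x}. c)" by simp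
  also have "\<dots> \<le> (\<Sum>x\<in>{x \<in> X. c \<le> f x}. f x)" by (rule sum_mono) auto
  also have "\<dots> \<le> (\<Sum>x\<in>X. f x)" using assms by (intro sum_mono2) auto
  finally show ?thesis .
qed

lemma card_avoiding_neighbours:
  assumes fin: "finite X" "finite P" "finite Q" and small: "card P \<le> 1" "card Q \<le> 1"
    and c: "0 \<le> c" and degP: "\<forall>y\<in>P. real (din E X y) \<le> c"
    and degQ: "\<forall>y\<in>Q. real (dout E X y) \<le> c"
  shows "real (card X)
    \<le> real (card {x \<in> X. (\<forall>y\<in>P. (x, y) \<notin> E) \<and> (\<forall>y\<in>Q. (y, x) \<notin> E)}) + 2 * c"
proof -
  let ?G = "{x \<in> X. (\<forall>y\<in>P. (x, y) \<notin> E) \<and> (\<forall>y\<in>Q. (y, x) \<notin> E)}"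
  let ?O = "{x \<in> X. \<exists>y\<in>P. (x, y) \<in> E}" and ?I = "{x \<in> X. \<exists>y\<in>Q. (y, x) \<in> E}"
  have "real (card ?O) \<le> (\<Sum>y\<in>P. real (din E X y))"
    using card_out_neighbours_le[OF fin(2), of X E] by (simp flip: of_nat_sum)
  also have "\<dots> \<le> real (card P) * c" using degP by (intro sum_bounded_above) auto
  also have "\<dots> \<le> c" using small(1) c by (intro mult_left_le_one_le) auto
  finally have O: "real (card ?O) \<le> c" .
  have "real (card ?I) \<le> (\<Sum>y\<in>Q. real (dout E X y))"
    using card_in_neighbours_le[OF fin(3), of X E] by (simp flip: of_nat_sum)
  also have "\<dots> \<le> real (card Q) * c" using degQ by (intro sum_bounded_above) auto
  also have "\<dots> \<le> c" using small(2) c by (intro mult_left_le_one_le) auto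
  finally have I: "real (card ?I) \<le> c" .
  have "X = ?G \<union> ?O \<union> ?I" by blast
  then have "card X = card (?G \<union> ?O \<union> ?I)" by simp
  also have "\<dots> \<le> card (?G \<union> ?O) + card ?I" by (rule card_Un_le)
  also have "\<dots> \<le> card ?G + card ?O + card ?I" using card_Un_le by simp
  finally show ?thesis using O I by linarith
qed

locale ST_partition =
  fixes V :: "'a set" and E :: "('a \<times> 'a) set" and A B S T :: "'a set" and eps3 eta2 :: real
  assumes digraph: "digraph V E"
    and large: "1000 \<le> card V"
    and semidegree: "real (card V) / 2 \<le> real (min_semideg E V)"
    and ST: "ST_conditions eps3 eta2 V E A B S T"
    and eta2_nonneg: "0 \<le> eta2" and eta2_small: "eta2 \<le> 1/100"
    and eps3_small: "eps3 \<le> 1/100"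
begin

abbreviation n :: real where "n \<equiv> real (card V)"

lemma partition: "V = A \<union> B \<union> S \<union> T"
  and disjoint: "A \<inter> B = {}" "A \<inter> S = {}" "A \<inter> T = {}" "B \<inter> S = {}" "B \<inter> T = {}" "S \<inter> T = {}"
  using ST unfolding ST_conditions_def Let_def by blast+

lemma finite: "finite V" "finite A" "finite B" "finite S" "finite T"
  using digraph partition unfolding digraph_def by (auto intro: finite_subset)

lemma no_loop: "(x, x) \<notin> E"
  using digraph unfolding digraph_def by blast

lemma card_V: "card V = card A + card B + card S + card T"
  using finite disjoint partition by (simp add: card_Un_disjoint Int_Un_distrib2)

lemma A_degrees: "x \<in> A \<Longrightarrow> real (din E S x) \<le> 3 * eta2 * n \<and> real (dout E T x) \<le> 3 * eta2 * n"
  and B_degrees: "x \<in> B \<Longrightarrow> real (dout E S x) \<le> 3 * eta2 * n \<and> real (din E T x) \<le> 3 * eta2 * n"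
  using ST unfolding ST_conditions_def Let_def by blast+

lemma sizes:
  "card S \<le> card T" "1000 \<le> n"
  "real (card A + card B) \<le> n / 100" "49/100 * n - 1 \<le> real (card S)" "eta2 * n \<le> n / 100"
proof -
  note st = ST[unfolded ST_conditions_def Let_def]
  show "card S \<le> card T" using st by blast
  show n: "1000 \<le> n" using large by simp
  have eps3n: "eps3 * n \<le> n / 100" using mult_right_mono[OF eps3_small, of n] by simp
  show "real (card A + card B) \<le> n / 100" using st eps3n by linarith
  have "real_of_int \<lfloor>n / 2\<rfloor> > n / 2 - 1" by linarith
  then show "49/100 * n - 1 \<le> real (card S)" using st eps3n by linarith
  show "eta2 * n \<le> n / 100" using mult_right_mono[OF eta2_small, of n] by simp
qed

text \<open>A vertex of a set X sends at least n/2 + 1 - |X| edges out of X (and receives as many),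
  since it has semidegree n/2 in G and at most |X| - 1 neighbours inside X.\<close>
lemma dout_outside:
  assumes "x \<in> X" "X \<subseteq> V" "V - X = Y \<union> Z"
  shows "n / 2 + 1 - real (card X) \<le> real (dout E Y x) + real (dout E Z x)"
proof -
  have fX: "finite X" using assms(2) finite(1) by (rule finite_subset)
  have "n / 2 \<le> real (dout E V x)"
    using semidegree min_semideg_le(1)[OF finite(1), of x E] assms by auto
  moreover have "dout E V x \<le> dout E X x + dout E (V - X) x"
    using dout_Un_le[of E X "V - X" x] assms(2) by (simp add: Un_absorb1)
  moreover have "dout E X x < card X" using dout_lt_card[OF fX assms(1) no_loop] .
  moreover have "dout E (V - X) x \<le> dout E Y x + dout E Z x" using assms(3) dout_Un_le by metis
  ultimately show ?thesis by linarith
qed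

lemma din_outside:
  assumes "x \<in> X" "X \<subseteq> V" "V - X = Y \<union> Z"
  shows "n / 2 + 1 - real (card X) \<le> real (din E Y x) + real (din E Z x)"
proof -
  have fX: "finite X" using assms(2) finite(1) by (rule finite_subset)
  have "n / 2 \<le> real (din E V x)"
    using semidegree min_semideg_le(2)[OF finite(1), of x E] assms by auto
  moreover have "din E V x \<le> din E X x + din E (V - X) x"
    using din_Un_le[of E X "V - X" x] assms(2) by (simp add: Un_absorb1)
  moreover have "din E X x < card X" using din_lt_card[OF fX assms(1) no_loop] .
  moreover have "din E (V - X) x \<le> din E Y x + din E Z x" using assms(3) din_Un_le by metis
  ultimately show ?thesis by linarith
qed

lemma complement_S: "V - S = T \<union> (A \<union> B)" "V - S = (T \<union> A) \<union> B"
  and complement_T: "V - T = S \<union> (A \<union> B)" "V - T = (S \<union> B) \<union> A"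
  using partition disjoint by blast+

lemma S_degrees:
  assumes "x \<in> S"
  shows "n / 2 + 1 - real (card S) \<le> real (dout E T x) + real (dout E A x) + real (dout E B x)"
    and "n / 2 + 1 - real (card S) \<le> real (din E T x) + real (din E A x) + real (din E B x)"
proof -
  have S: "S \<subseteq> V" using partition by blast
  show "n / 2 + 1 - real (card S) \<le> real (dout E T x) + real (dout E A x) + real (dout E B x)"
    using dout_outside[OF assms S complement_S(1)] dout_Un_le[of E A B x] by linarith
  show "n / 2 + 1 - real (card S) \<le> real (din E T x) + real (din E A x) + real (din E B x)"
    using din_outside[OF assms S complement_S(1)] din_Un_le[of E A B x] by linarith
qed

lemma T_degrees:
  assumes "x \<in> T"
  shows "n / 2 + 1 - real (card T) \<le> real (dout E S x) + real (dout E A x) + real (dout E B x)"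
    and "n / 2 + 1 - real (card T) \<le> real (din E S x) + real (din E A x) + real (din E B x)"
proof -
  have T: "T \<subseteq> V" using partition by blast
  show "n / 2 + 1 - real (card T) \<le> real (dout E S x) + real (dout E A x) + real (dout E B x)"
    using dout_outside[OF assms T complement_T(1)] dout_Un_le[of E A B x] by linarith
  show "n / 2 + 1 - real (card T) \<le> real (din E S x) + real (din E A x) + real (din E B x)"
    using din_outside[OF assms T complement_T(1)] din_Un_le[of E A B x] by linarith
qed

text \<open>If |A| = |B| <= 1, all but 6 eta2 n vertices of S have no
  out-neighbour in A and no in-neighbour in B (each vertex of A, B has few neighbours in S);
  such a vertex has both semidegrees towards T at least n/2 + 1 - |S| - |A|.\<close>
lemma good_S_vertices:
  assumes ab: "card A = card B" "card A \<le> 1"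
  obtains Sg where "Sg \<subseteq> S" "3 \<le> card Sg"
    "\<And>x. x \<in> Sg \<Longrightarrow> n / 2 + 1 - real (card S) - real (card A) \<le> real (dout E T x)"
    "\<And>x. x \<in> Sg \<Longrightarrow> n / 2 + 1 - real (card S) - real (card A) \<le> real (din E T x)"
proof
  define Sg where "Sg = {x \<in> S. (\<forall>y\<in>A. (x, y) \<notin> E) \<and> (\<forall>y\<in>B. (y, x) \<notin> E)}"
  show "Sg \<subseteq> S" unfolding Sg_def by auto
  have "real (card S) \<le> real (card Sg) + 2 * (3 * eta2 * n)" unfolding Sg_def
    by (rule card_avoiding_neighbours[OF finite(4,2,3)])
      (use ab A_degrees B_degrees eta2_nonneg in auto)
  then have "3 \<le> real (card Sg)" using sizes by linarith
  then show "3 \<le> card Sg" by simp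
  fix x assume "x \<in> Sg"
  then have "x \<in> S" "dout E A x = 0" "din E B x = 0"
    using dout_pos_imp_neighbour[of E A x] din_pos_imp_neighbour[of E B x]
    unfolding Sg_def by auto
  then show "n / 2 + 1 - real (card S) - real (card A) \<le> real (dout E T x)"
    "n / 2 + 1 - real (card S) - real (card A) \<le> real (din E T x)"
    using S_degrees[of x] dout_le_card[OF finite(3), of E x] din_le_card[OF finite(2), of E x] ab
    by auto
qed

lemma good_T_vertices:
  assumes ab: "card A = card B" "card A \<le> 1"
  obtains Tg where "Tg \<subseteq> T" "3 \<le> card Tg"
    "\<And>x. x \<in> Tg \<Longrightarrow> n / 2 + 1 - real (card T) - real (card A) \<le> real (dout E S x)"
    "\<And>x. x \<in> Tg \<Longrightarrow> n / 2 + 1 - real (card T) - real (card A) \<le> real (din E S x)"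
proof
  define Tg where "Tg = {x \<in> T. (\<forall>y\<in>B. (x, y) \<notin> E) \<and> (\<forall>y\<in>A. (y, x) \<notin> E)}"
  show "Tg \<subseteq> T" unfolding Tg_def by auto
  have "real (card T) \<le> real (card Tg) + 2 * (3 * eta2 * n)" unfolding Tg_def
    by (rule card_avoiding_neighbours[OF finite(5,3,2)])
      (use ab A_degrees B_degrees eta2_nonneg in auto)
  then have "3 \<le> real (card Tg)" using sizes by linarith
  then show "3 \<le> card Tg" by simp
  fix x assume "x \<in> Tg"
  then have "x \<in> T" "dout E B x = 0" "din E A x = 0"
    using dout_pos_imp_neighbour[of E B x] din_pos_imp_neighbour[of E A x]
    unfolding Tg_def by auto
  then show "n / 2 + 1 - real (card T) - real (card A) \<le> real (dout E S x)"
    "n / 2 + 1 - real (card T) - real (card A) \<le> real (din E S x)"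
    using T_degrees[of x] dout_le_card[OF finite(2), of E x] din_le_card[OF finite(3), of E x] ab
    by auto
qed

text \<open>As n = 2|A| + |S| + |T|, the good vertices of S have both semidegrees towards
  T at least 1 + (|T| - |S|)/2.  If |S| < |T| these degrees are at least 2; otherwise the good
  vertices of S and of T all have degree at least 1 towards each other.\<close>
lemma balanced_case:
  assumes ab: "card A = card B" "card A \<le> 1"
  shows "disjoint_edges (edges_between E S T) (edges_between E S T) \<and>
         disjoint_edges (edges_between E T S) (edges_between E T S) \<and>
         disjoint_edges (edges_between E S T) (edges_between E T S)"
proof -
  obtain Sg where SgS: "Sg \<subseteq> S" and Sg3: "3 \<le> card Sg"
    and Sg_degrees: "\<And>x. x \<in> Sg \<Longrightarrow> n / 2 + 1 - real (card S) - real (card A) \<le> real (dout E T x)"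
      "\<And>x. x \<in> Sg \<Longrightarrow> n / 2 + 1 - real (card S) - real (card A) \<le> real (din E T x)"
    using good_S_vertices[OF ab] by metis
  have n_eq: "n = 2 * real (card A) + real (card S) + real (card T)" using card_V ab by simp
  have TS: "T \<inter> S = {}" using disjoint(6) by blast
  show ?thesis
  proof (cases "card S < card T")
    case True
    then have "real (card S) < real (card T)" by simp
    then have "1 < real (dout E T x) \<and> 1 < real (din E T x)" if "x \<in> Sg" for x
      using Sg_degrees[OF that] n_eq by linarith
    then have deg: "\<forall>x\<in>Sg. 2 \<le> dout E T x" "\<forall>x\<in>Sg. 2 \<le> din E T x" "\<forall>x\<in>Sg. 0 < dout E T x"
      by force+
    have "2 \<le> card Sg" using Sg3 by simp
    then show ?thesis
      using disjoint_edges_of_out_degrees[OF disjoint(6) SgS _ deg(1)]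
        disjoint_edges_of_in_degrees[OF TS SgS _ deg(2)]
        mixed_edges_of_degrees[OF disjoint(6) SgS _ deg(3,2)] by blast
  next
    case False
    obtain Tg where TgT: "Tg \<subseteq> T" and Tg3: "3 \<le> card Tg"
      and Tg_degrees: "\<And>x. x \<in> Tg \<Longrightarrow> n / 2 + 1 - real (card T) - real (card A) \<le> real (dout E S x)"
        "\<And>x. x \<in> Tg \<Longrightarrow> n / 2 + 1 - real (card T) - real (card A) \<le> real (din E S x)"
      using good_T_vertices[OF ab] by metis
    from False have "real (card S) = real (card T)" using sizes by simp
    then have "0 < real (dout E T x) \<and> 0 < real (din E T x)" if "x \<in> Sg" for x
      using Sg_degrees[OF that] n_eq by linarith
    then have Sg_nbrs: "\<forall>x\<in>Sg. \<exists>y\<in>T. (x, y) \<in> E" "\<forall>x\<in>Sg. \<exists>y\<in>T. (y, x) \<in> E"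
      by (auto intro!: dout_pos_imp_neighbour din_pos_imp_neighbour)
    have "0 < real (dout E S x) \<and> 0 < real (din E S x)" if "x \<in> Tg" for x
      using Tg_degrees[OF that] n_eq \<open>real (card S) = real (card T)\<close> by linarith
    then have Tg_nbrs: "\<forall>x\<in>Tg. \<exists>y\<in>S. (x, y) \<in> E" "\<forall>x\<in>Tg. \<exists>y\<in>S. (y, x) \<in> E"
      by (auto intro!: dout_pos_imp_neighbour din_pos_imp_neighbour)
    show ?thesis
      using disjoint_edges_of_covers[OF disjoint(6) SgS TgT _ _ Sg_nbrs(1) Tg_nbrs(2)]
        disjoint_edges_of_covers[OF TS TgT SgS _ _ Tg_nbrs(1) Sg_nbrs(2)]
        mixed_edges_of_covers[OF disjoint(6) SgS TgT _ _ Sg_nbrs(1) Tg_nbrs(1)] Sg3 Tg3 by simp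
  qed
qed

text \<open>Markov's inequality for the in-degrees from B: since every vertex of B has at most
  3 eta2 n out-neighbours in S, few vertices of S receive gap or more edges from B, provided gap
  is a fixed fraction of |B|.\<close>
lemma few_heavy_from_B:
  assumes gap: "0 < gap" "real (card B) \<le> 4 * gap"
  shows "real (card {x \<in> S. gap \<le> real (din E B x)}) \<le> 12 * eta2 * n"
proof -
  have "real (card {x \<in> S. gap \<le> real (din E B x)}) * gap \<le> (\<Sum>x\<in>S. real (din E B x))"
    by (rule markov_card[OF finite(4)]) simp
  also have "\<dots> = (\<Sum>y\<in>B. real (dout E S y))"
    using sum_din_eq_sum_dout[OF finite(4,3), of E] by (metis of_nat_sum)
  also have "\<dots> \<le> real (card B) * (3 * eta2 * n)"
    using B_degrees by (intro sum_bounded_above) auto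
  also have "\<dots> \<le> (12 * eta2 * n) * gap"
    using gap eta2_nonneg mult_right_mono[OF gap(2), of "3 * eta2 * n"] by simp
  finally show ?thesis using gap(1) by (simp add: mult_le_cancel_right)
qed

text \<open>If |A| <= 1 and |B| >= max(2|A|, |A| + 1), take gap = (|B| - |A|)/2.
  All but 12 eta2 n vertices of S receive fewer than gap edges from B, and such a vertex receives
  at least two edges from T, because n/2 - |S| >= (|A| + |B|)/2.\<close>
lemma unbalanced_case:
  assumes ab: "card A \<le> 1" "2 * card A \<le> card B" "card A < card B"
  shows "disjoint_edges (edges_between E T S) (edges_between E T S)"
proof -
  define gap where "gap = (real (card B) - real (card A)) / 2"
  have "real (card A) < real (card B)" "2 * real (card A) \<le> real (card B)" using ab by simp_all
  then have gap: "0 < gap" "real (card B) \<le> 4 * gap" by (simp_all add: gap_def)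
  define Good where "Good = {x \<in> S. real (din E B x) < gap}"
  have "S = Good \<union> {x \<in> S. gap \<le> real (din E B x)}" unfolding Good_def by auto
  then have "card S \<le> card Good + card {x \<in> S. gap \<le> real (din E B x)}" by (metis card_Un_le)
  then have "2 \<le> real (card Good)" using few_heavy_from_B[OF gap] sizes by linarith
  then have Good2: "2 \<le> card Good" by simp
  have n_eq: "n = real (card A) + real (card B) + real (card S) + real (card T)"
    using card_V by simp
  have "1 < real (din E T x)" if "x \<in> Good" for x
  proof -
    have xS: "x \<in> S" and "real (din E B x) < gap" using that unfolding Good_def by auto
    moreover have "real (din E A x) \<le> real (card A)" using din_le_card[OF finite(2)] by simp
    moreover have "real (card S) \<le> real (card T)" using sizes(1) by simp
    ultimately show ?thesis using S_degrees(2)[OF xS] n_eq unfolding gap_def by argo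
  qed
  then have "\<forall>x\<in>Good. 2 \<le> din E T x" by force
  moreover have "Good \<subseteq> S" "T \<inter> S = {}" unfolding Good_def using disjoint(6) by auto
  ultimately show ?thesis using disjoint_edges_of_in_degrees Good2 by blast
qed

lemma crossing_degrees:
  shows "x \<in> S \<Longrightarrow> n / 2 + 1 - real (card S) - real (card B) \<le> real (dout E (T \<union> A) x)"
    and "x \<in> T \<Longrightarrow> n / 2 + 1 - real (card T) - real (card A) \<le> real (dout E (S \<union> B) x)"
proof -
  have SV: "S \<subseteq> V" and TV: "T \<subseteq> V" using partition by auto
  show "n / 2 + 1 - real (card S) - real (card B) \<le> real (dout E (T \<union> A) x)" if "x \<in> S"
    using dout_outside[OF that SV complement_S(2)] dout_le_card[OF finite(3), of E x] by simp
  show "n / 2 + 1 - real (card T) - real (card A) \<le> real (dout E (S \<union> B) x)" if "x \<in> T"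
    using dout_outside[OF that TV complement_T(2)] dout_le_card[OF finite(2), of E x] by simp
qed

text \<open>Part (iv).  The two bounds of crossing_degrees add up to 2, as n = |A| + |B| + |S| + |T|.
  So either one side has out-degree at least 2 throughout, or both sides have out-degree at least 1.\<close>
lemma crossing_case:
  "disjoint_edges (edges_between E S (T \<union> A) \<union> edges_between E T (S \<union> B))
                  (edges_between E S (T \<union> A) \<union> edges_between E T (S \<union> B))"
proof -
  note S_out = crossing_degrees(1) and T_out = crossing_degrees(2)
  have n_eq: "n = real (card A) + real (card B) + real (card S) + real (card T)"
    using card_V by simp
  have "2 \<le> real (card S)" "2 \<le> real (card T)" using sizes by (linarith, simp)
  then have S2: "2 \<le> card S" and T2: "2 \<le> card T" by simp_all
  have ST_disj: "S \<inter> (T \<union> A) = {}" "T \<inter> (S \<union> B) = {}" using disjoint by auto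
  consider (S_rich) "2 * real (card S) + 2 * real (card B) < n"
    | (T_rich) "2 * real (card T) + 2 * real (card A) < n"
    | (balanced) "2 * real (card S) + 2 * real (card B) = n" "2 * real (card T) + 2 * real (card A) = n"
    using n_eq by linarith
  then show ?thesis
  proof cases
    case S_rich
    then have "1 < real (dout E (T \<union> A) x)" if "x \<in> S" for x using S_out[OF that] by linarith
    then have "\<forall>x\<in>S. 2 \<le> dout E (T \<union> A) x" by force
    then show ?thesis
      using disjoint_edges_of_out_degrees[OF ST_disj(1) subset_refl S2] disjoint_edges_mono by blast
  next
    case T_rich
    then have "1 < real (dout E (S \<union> B) x)" if "x \<in> T" for x using T_out[OF that] by linarith
    then have "\<forall>x\<in>T. 2 \<le> dout E (S \<union> B) x" by force
    then show ?thesis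
      using disjoint_edges_of_out_degrees[OF ST_disj(2) subset_refl T2] disjoint_edges_mono by blast
  next
    case balanced
    then have "0 < real (dout E (T \<union> A) x)" if "x \<in> S" for x using S_out[OF that] by linarith
    then have S_nbrs: "\<forall>x\<in>S. \<exists>y\<in>T \<union> A. (x, y) \<in> E" by (auto intro!: dout_pos_imp_neighbour)
    have "0 < real (dout E (S \<union> B) x)" if "x \<in> T" for x using T_out[OF that] balanced by linarith
    then have T_nbrs: "\<forall>x\<in>T. \<exists>y\<in>S \<union> B. (x, y) \<in> E" by (auto intro!: dout_pos_imp_neighbour)
    have "(T \<union> A) \<inter> (S \<union> B) = {}" using disjoint by auto
    then show ?thesis
      by (intro disjoint_edges_of_crossing_covers[OF _ _ _ S2 T2 S_nbrs T_nbrs]) auto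
  qed
qed

theorem conclusions:
  "(card A = card B \<and> card A \<le> 1 \<longrightarrow>
      (\<forall>X1 Y1 X2 Y2. (X1, Y1) \<in> {(S, T), (T, S)} \<and> (X2, Y2) \<in> {(S, T), (T, S)} \<longrightarrow>
          disjoint_edges (edges_between E X1 Y1) (edges_between E X2 Y2))) \<and>
   (A = {} \<longrightarrow> disjoint_edges (edges_between E T S) (edges_between E T S)) \<and>
   (card A = 1 \<and> 2 \<le> card B \<longrightarrow> disjoint_edges (edges_between E T S) (edges_between E T S)) \<and>
   disjoint_edges (edges_between E S (T \<union> A) \<union> edges_between E T (S \<union> B))
                  (edges_between E S (T \<union> A) \<union> edges_between E T (S \<union> B))"
proof (intro conjI impI)
  assume "card A = card B \<and> card A \<le> 1"
  then show "\<forall>X1 Y1 X2 Y2. (X1, Y1) \<in> {(S, T), (T, S)} \<and> (X2, Y2) \<in> {(S, T), (T, S)} \<longrightarrow>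
          disjoint_edges (edges_between E X1 Y1) (edges_between E X2 Y2)"
    using balanced_case disjoint_edges_sym by auto
next
  assume "A = {}"
  then show "disjoint_edges (edges_between E T S) (edges_between E T S)"
    using balanced_case unbalanced_case by (cases "card B = 0") auto
next
  assume "card A = 1 \<and> 2 \<le> card B"
  then show "disjoint_edges (edges_between E T S) (edges_between E T S)"
    using unbalanced_case by simp
qed (rule crossing_case)

end

theorem proposition5p3:
  "\<exists>eta0 > (0::real). \<forall>eta2. 0 < eta2 \<and> eta2 \<le> eta0 \<longrightarrow>
   (\<exists>eps4_0 > (0::real). \<forall>eps4. 0 < eps4 \<and> eps4 \<le> eps4_0 \<longrightarrow>
   (\<exists>eps3_0 > (0::real). \<forall>eps3. 0 < eps3 \<and> eps3 \<le> eps3_0 \<longrightarrow>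
   (\<exists>N::nat. \<forall>(V::'a set) E A B S T.
      digraph V E \<and> card V \<ge> N \<and> min_semideg E V \<ge> card V / 2 \<and>
      ST_conditions eps3 eta2 V E A B S T \<longrightarrow>
      ((card A = card B \<and> card A \<le> 1 \<longrightarrow>
         (\<forall>X1 Y1 X2 Y2. (X1, Y1) \<in> {(S, T), (T, S)} \<and> (X2, Y2) \<in> {(S, T), (T, S)} \<longrightarrow>
            (\<exists>e1 \<in> edges_between E X1 Y1. \<exists>e2 \<in> edges_between E X2 Y2. vdisjoint e1 e2))) \<and>
       (A = {} \<longrightarrow> (\<exists>e1 \<in> edges_between E T S. \<exists>e2 \<in> edges_between E T S. vdisjoint e1 e2)) \<and>
       (card A = 1 \<and> card B \<ge> 2 \<longrightarrow>
          (\<exists>e1 \<in> edges_between E T S. \<exists>e2 \<in> edges_between E T S. vdisjoint e1 e2)) \<and>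
       (\<exists>e1 \<in> edges_between E S (T \<union> A) \<union> edges_between E T (S \<union> B).
        \<exists>e2 \<in> edges_between E S (T \<union> A) \<union> edges_between E T (S \<union> B). vdisjoint e1 e2)))))"
  \<comment> \<open>eta0 = eps4_0 = eps3_0 = 1/100 and N = 1000; then every instance is an ST_partition\<close>
  unfolding disjoint_edges_def[symmetric]
  by (intro exI[of _ "1/100"] exI[of _ "1000::nat"] conjI[of "0 < (1/100::real)"] allI impI
        ST_partition.conclusions ST_partition.intro) auto

end
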